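(* Let $D$ be a finite-dimensional division algebra over $\mathbb Q$ and $n\in\mathbb Z_{>0}$. Let $\Sigma$ be a non-trivial finitely generated abelian subgroup of ${\rm GL}_n(D)$ consisting of unipotent matrices, so that each $\alpha\in\Sigma$ is $\alpha=1+\eta_\alpha$ with $\eta_\alpha\in M_n(D)$ nilpotent. Let $\mathfrak k=\bigcap_{\alpha\in\Sigma}\ker\eta_\alpha\subseteq D^n$ and $k=\dim_D\mathfrak k$ (as a right $D$-vector space). Then ${\rm rk}_{\mathbb Z}\Sigma<n\cdot(n-k)\cdot[D:\mathbb Q]$.
   Context: $D^n$ is regarded as an $M_n(D)$–$D$-bimodule; dimensions over $D$ are of right $D$-vector spaces. ${\rm rk}_{\mathbb Z}$ is the torsion-free rank of an abelian group. *)

theory Defs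
  imports "HOL-Analysis.Analysis" "HOL-Algebra.FiniteProduct" "HOL-Algebra.Generated_Groups"
begin

text \<open>Scalar multiplication of a rational on an element of a ring of characteristic 0
  (the prime field of a division ring of characteristic 0 is Q, which is central).\<close>
definition rat_scale :: "rat \<Rightarrow> 'a::{division_ring,ring_char_0} \<Rightarrow> 'a" where
  "rat_scale q x = (of_int (fst (quotient_of q)) * inverse (of_int (snd (quotient_of q)))) * x"

definition fin_dim_over_Q :: "'a::{division_ring,ring_char_0} itself \<Rightarrow> bool" where
  "fin_dim_over_Q _ \<longleftrightarrow> (\<exists>B::'a set. finite B \<and> module.span rat_scale B = UNIV)"

definition degree_over_Q :: "'a::{division_ring,ring_char_0} itself \<Rightarrow> nat" where
  "degree_over_Q _ = vector_space.dim (rat_scale :: rat \<Rightarrow> 'a \<Rightarrow> 'a) UNIV"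

definition GL :: "('a::semiring_1^'n^'n) monoid" where
  "GL = \<lparr>carrier = {A. invertible A}, mult = (**), one = mat 1\<rparr>"

definition nilpotent_mat :: "'a::semiring_1^'n^'n \<Rightarrow> bool" where
  "nilpotent_mat N \<longleftrightarrow> (\<exists>m. (((**) N) ^^ m) (mat 1) = 0)"

definition unipotent_mat :: "'a::ring_1^'n^'n \<Rightarrow> bool" where
  "unipotent_mat A \<longleftrightarrow> nilpotent_mat (A - mat 1)"

definition right_indep :: "('a::ring_1^'n) set \<Rightarrow> bool" where
  "right_indep S \<longleftrightarrow> finite S \<and>
     (\<forall>c. (\<Sum>v\<in>S. (\<chi> i. v $ i * c v)) = 0 \<longrightarrow> (\<forall>v\<in>S. c v = 0))"

definition right_dim :: "('a::ring_1^'n) set \<Rightarrow> nat" where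
  "right_dim V = Sup {card S | S. S \<subseteq> V \<and> right_indep S}"

definition Z_indep :: "('g, 'b) monoid_scheme \<Rightarrow> 'g set \<Rightarrow> bool" where
  "Z_indep G S \<longleftrightarrow> finite S \<and> S \<subseteq> carrier G \<and>
     (\<forall>c::'g \<Rightarrow> int. finprod G (\<lambda>g. g [^]\<^bsub>G\<^esub> c g) S = \<one>\<^bsub>G\<^esub> \<longrightarrow> (\<forall>g\<in>S. c g = 0))"

definition rank_Z :: "('g, 'b) monoid_scheme \<Rightarrow> nat" where
  "rank_Z G = Sup {card S | S. Z_indep G S}"

end

theory Submission
  imports Defs "HOL-Computational_Algebra.Polynomial"
begin

text \<open>A unipotent matrix \<open>X\<close> has the logarithm \<open>log X = \<Sum>j. c\<^sub>j (X - 1)^j\<close>, a finite sum,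
  where \<open>c\<^sub>j\<close> is the coefficient of \<open>t\<close> in the polynomial \<open>t choose j\<close>.  Comparing the
  coefficients of \<open>t\<close> in the polynomial identity \<open>(X Y)^t = X^t Y^t\<close> shows that \<open>log\<close> is
  additive on commuting unipotent matrices, so on \<open>\<Sigma>\<close> it is an injective homomorphism that
  sends \<open>\<int>\<close>-independent elements to \<open>\<rat>\<close>-independent matrices.  After clearing
  denominators, every element of their \<open>\<rat>\<close>-span is a multiple of the logarithm of an element
  of \<open>\<Sigma>\<close>, hence nilpotent; and all of them kill the common kernel \<open>K\<close> of the \<open>\<eta>\<^sub>\<alpha>\<close>.

  Extend a right basis of \<open>K\<close> to a right basis of \<open>D^n\<close> and let \<open>P\<close> have these vectors as
  columns.  Right multiplication by \<open>P\<close> embeds the matrices killing \<open>K\<close> into the matrices with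
  \<open>k\<close> prescribed zero columns, a \<open>\<rat>\<close>-space of dimension \<open>n (n - k) [D:\<rat>]\<close>.  That space
  also contains the matrix whose only nonzero column is a column \<open>u\<close> of \<open>P\<close> outside \<open>K\<close>,
  and this matrix is not \<open>Z P\<close> for a nilpotent \<open>Z\<close>, since then \<open>Z u = u\<close>.  Dimensions of right \<open>D\<close>-spaces are computed as
  \<open>\<rat>\<close>-dimensions divided by \<open>[D:\<rat>]\<close>.\<close>

section \<open>Rational scalars on a division ring of characteristic 0\<close>

definition rat_embed :: "rat \<Rightarrow> 'a::{division_ring,ring_char_0}" where
  "rat_embed q = of_int (fst (quotient_of q)) * inverse (of_int (snd (quotient_of q)))"

lemma rat_scale_eq: "rat_scale q x = rat_embed q * x"
  by (simp add: rat_scale_def rat_embed_def)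

lemma rat_embed_central: "rat_embed q * x = x * (rat_embed q :: 'a::{division_ring,ring_char_0})"
proof -
  have "inverse (of_int k) * x = x * (inverse (of_int k) :: 'a)" for k
    by (rule mult_commute_imp_mult_inverse_commute) (simp add: mult_of_int_commute)
  then show ?thesis
    unfolding rat_embed_def by (metis mult.assoc mult_of_int_commute)
qed

lemma rat_embed_unique:
  assumes "b \<noteq> 0" "q = of_int a / of_int b" "x * of_int b = (of_int a :: 'a::{division_ring,ring_char_0})"
  shows "rat_embed q = x"
proof -
  obtain a' b' where qo: "quotient_of q = (a', b')" by (cases "quotient_of q")
  then have "b' > 0" and q: "q = of_int a' / of_int b'"
    by (simp_all add: quotient_of_denom_pos quotient_of_div)
  with assms have "of_int (a * b') = (of_int (a' * b) :: rat)"
    by (simp add: field_simps)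
  then have "(of_int a' * of_int b :: 'a) = of_int a * of_int b'"
    by (metis mult.commute of_int_eq_iff of_int_mult)
  also have "\<dots> = x * of_int b' * of_int b"
    using assms(3) by (metis mult.assoc mult_of_int_commute)
  finally have "of_int a' = x * of_int b'"
    using assms(1) by simp
  then show ?thesis
    using \<open>b' > 0\<close> qo by (simp add: rat_embed_def mult.assoc)
qed

lemma rat_embed_spec:
  obtains a b where "b > 0" "q = of_int a / of_int b"
    "(rat_embed q :: 'a::{division_ring,ring_char_0}) * of_int b = of_int a"
proof -
  obtain a b where qo: "quotient_of q = (a, b)" by (cases "quotient_of q")
  then have "b > 0" "q = of_int a / of_int b"
    by (simp_all add: quotient_of_denom_pos quotient_of_div)
  moreover have "(rat_embed q :: 'a) * of_int b = of_int a"
    using qo \<open>b > 0\<close> by (simp add: rat_embed_def mult.assoc)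
  ultimately show ?thesis by (rule that)
qed

lemma rat_embed_add: "(rat_embed (p + q) :: 'a::{division_ring,ring_char_0}) = rat_embed p + rat_embed q"
proof -
  obtain a b where b: "b > 0" "p = of_int a / of_int b" "(rat_embed p :: 'a) * of_int b = of_int a"
    by (rule rat_embed_spec)
  obtain c e where e: "e > 0" "q = of_int c / of_int e" "(rat_embed q :: 'a) * of_int e = of_int c"
    by (rule rat_embed_spec)
  have pq: "p + q = of_int (a * e + c * b) / of_int (b * e)"
    using b e by (simp add: field_simps)
  have "(rat_embed p + rat_embed q :: 'a) * of_int (b * e)
      = rat_embed p * of_int b * of_int e + rat_embed q * of_int e * of_int b"
    by (simp add: distrib_right mult.assoc mult_of_int_commute[of e])
  also have "\<dots> = of_int (a * e + c * b)"
    using b(3) e(3) by simp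
  finally show ?thesis
    using b e by (intro rat_embed_unique[OF _ pq]) simp_all
qed

lemma rat_embed_mult: "(rat_embed (p * q) :: 'a::{division_ring,ring_char_0}) = rat_embed p * rat_embed q"
proof -
  obtain a b where b: "b > 0" "p = of_int a / of_int b" "(rat_embed p :: 'a) * of_int b = of_int a"
    by (rule rat_embed_spec)
  obtain c e where e: "e > 0" "q = of_int c / of_int e" "(rat_embed q :: 'a) * of_int e = of_int c"
    by (rule rat_embed_spec)
  have pq: "p * q = of_int (a * c) / of_int (b * e)"
    using b e by (simp add: field_simps)
  have "(rat_embed p * rat_embed q :: 'a) * of_int (b * e) = rat_embed p * (rat_embed q * of_int e) * of_int b"
    by (simp add: mult.assoc mult_of_int_commute[of e])
  also have "\<dots> = of_int c * (rat_embed p * of_int b)"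
    using e(3) by (simp add: mult.assoc mult_of_int_commute[of c])
  also have "\<dots> = of_int (a * c)"
    using b(3) by (simp add: mult_of_int_commute[of c])
  finally show ?thesis
    using b e by (intro rat_embed_unique[OF _ pq]) simp_all
qed

lemma rat_embed_of_int [simp]: "(rat_embed (of_int k) :: 'a::{division_ring,ring_char_0}) = of_int k"
  by (rule rat_embed_unique[of 1]) simp_all

lemma rat_embed_0 [simp]: "rat_embed 0 = 0" and rat_embed_1 [simp]: "rat_embed 1 = 1"
  using rat_embed_of_int[of 0] rat_embed_of_int[of 1] by simp_all

interpretation QD: vector_space "rat_scale :: rat \<Rightarrow> 'a::{division_ring,ring_char_0} \<Rightarrow> 'a"
  by unfold_locales
    (simp_all add: rat_scale_eq distrib_left distrib_right rat_embed_add rat_embed_mult mult.assoc)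

definition scale_vec :: "(rat \<Rightarrow> 'b \<Rightarrow> 'b) \<Rightarrow> rat \<Rightarrow> 'b^'n \<Rightarrow> 'b^'n" where
  "scale_vec s q v = (\<chi> i. s q (v $ i))"

lemma scale_vec_nth [simp]: "scale_vec s q v $ i = s q (v $ i)"
  by (simp add: scale_vec_def)

lemma vector_space_scale_vec:
  assumes "vector_space (s :: rat \<Rightarrow> 'b::ab_group_add \<Rightarrow> 'b)"
  shows "vector_space (scale_vec s :: rat \<Rightarrow> 'b^'n \<Rightarrow> 'b^'n)"
proof -
  interpret vector_space s by fact
  show ?thesis
    by unfold_locales (simp_all add: vec_eq_iff scale_right_distrib scale_left_distrib)
qed

abbreviation qscale_vec :: "rat \<Rightarrow> 'a::{division_ring,ring_char_0}^'n \<Rightarrow> 'a^'n" where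
  "qscale_vec \<equiv> scale_vec rat_scale"

abbreviation qscale_mat :: "rat \<Rightarrow> 'a::{division_ring,ring_char_0}^'n^'m \<Rightarrow> 'a^'n^'m" where
  "qscale_mat \<equiv> scale_vec (scale_vec rat_scale)"

interpretation QV: vector_space "qscale_vec :: rat \<Rightarrow> 'a::{division_ring,ring_char_0}^'n \<Rightarrow> _"
  by (intro vector_space_scale_vec QD.vector_space_axioms)

interpretation QM: vector_space "qscale_mat :: rat \<Rightarrow> 'a::{division_ring,ring_char_0}^'n^'m \<Rightarrow> _"
  by (intro vector_space_scale_vec QV.vector_space_axioms)

lemma qscale_mat_mult_left: "qscale_mat q X ** Y = qscale_mat q (X ** Y)"
  by (simp add: vec_eq_iff matrix_matrix_mult_def sum_distrib_left mult.assoc rat_scale_eq)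

lemma qscale_mat_mult_right: "X ** qscale_mat q Y = qscale_mat q (X ** Y)"
proof -
  have "X $ i $ k * (rat_embed q * Y $ k $ j) = rat_embed q * (X $ i $ k * Y $ k $ j)" for i k j
    by (metis rat_embed_central mult.assoc)
  then show ?thesis
    by (simp add: vec_eq_iff matrix_matrix_mult_def sum_distrib_left rat_scale_eq)
qed

lemma matrix_add_rdistrib: "(A + B) ** C = A ** C + B ** (C :: 'a::semiring_1^'n^'m)"
  by (simp add: vec_eq_iff matrix_matrix_mult_def distrib_right sum.distrib)

lemma matrix_neg_right: "C ** (- A) = - (C ** (A :: 'a::ring_1^'n^'m))"
  by (simp add: vec_eq_iff matrix_matrix_mult_def sum_negf)

lemma matrix_sum_left: "(\<Sum>i\<in>I. f i) ** (Y :: 'a::semiring_1^'n^'m) = (\<Sum>i\<in>I. f i ** Y)"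
  by (induct I rule: infinite_finite_induct) (simp_all add: matrix_add_rdistrib)

lemma matrix_sum_right: "(Y :: 'a::semiring_1^'n^'m) ** (\<Sum>i\<in>I. f i) = (\<Sum>i\<in>I. Y ** f i)"
  by (induct I rule: infinite_finite_induct) (simp_all add: matrix_add_ldistrib)

lemma matrix_vector_mult_sum_right: "M *v (\<Sum>i\<in>I. f i) = (\<Sum>i\<in>I. M *v (f i :: 'a::semiring_1^'n))"
  by (induct I rule: infinite_finite_induct) (simp_all add: matrix_vector_right_distrib)

lemma matrix_vector_mult_axis: "(M *v axis j 1) $ i = M $ i $ j" for M :: "'a::semiring_1^'n^'m"
  by (simp add: matrix_vector_mult_def axis_def if_distrib[of "\<lambda>x. _ * x"] cong: if_cong)

lemma matrix_eq_if_vector_mult_eq: "(\<And>x. M *v x = N *v x) \<Longrightarrow> M = (N :: 'a::semiring_1^'n^'m)"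
  by (metis matrix_vector_mult_axis vec_eq_iff)

definition mat_pow :: "'a::semiring_1^'n^'n \<Rightarrow> nat \<Rightarrow> 'a^'n^'n" where
  "mat_pow X k = (((**) X) ^^ k) (mat 1)"

lemma mat_pow_0 [simp]: "mat_pow X 0 = mat 1"
  by (simp add: mat_pow_def)

lemma mat_pow_Suc: "mat_pow X (Suc k) = X ** mat_pow X k"
  by (simp add: mat_pow_def)

lemma nilpotent_mat_iff_mat_pow: "nilpotent_mat N \<longleftrightarrow> (\<exists>m. mat_pow N m = 0)"
  by (simp add: nilpotent_mat_def mat_pow_def)

lemma mat_pow_add: "mat_pow X (j + k) = mat_pow X j ** mat_pow X k"
  by (induct j) (simp_all add: mat_pow_Suc matrix_mul_assoc)

lemma mat_pow_Suc': "mat_pow X (Suc k) = mat_pow X k ** X"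
  using mat_pow_add[of X k 1] by (simp add: mat_pow_Suc)

lemma mat_pow_eq_0_mono: "mat_pow X m = 0 \<Longrightarrow> m \<le> k \<Longrightarrow> mat_pow X k = (0 :: 'a::semiring_1^'n^'n)"
  using mat_pow_add[of X m "k - m"] by simp

lemma mat_1_neq_0: "mat 1 \<noteq> (0 :: 'a::zero_neq_one^'n^'n)"
proof
  assume "mat 1 = (0 :: 'a^'n^'n)"
  then have "(mat 1 :: 'a^'n^'n) $ undefined $ undefined = 0"
    by simp
  then show False
    by (simp add: mat_def)
qed

lemma mat_pow_eq_0_pos: "mat_pow (X :: 'a::{semiring_1,zero_neq_one}^'n^'n) K = 0 \<Longrightarrow> 0 < K"
  using mat_1_neq_0 by (cases K) auto

lemma mat_pow_qscale: "mat_pow (qscale_mat q X) k = qscale_mat (q ^ k) (mat_pow X k)"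
  by (induct k) (simp_all add: mat_pow_Suc qscale_mat_mult_left qscale_mat_mult_right QM.scale_scale mult.commute)

definition mat_commute :: "'a::semiring_1^'n^'n \<Rightarrow> 'a^'n^'n \<Rightarrow> bool" where
  "mat_commute X Y \<longleftrightarrow> X ** Y = Y ** X"

lemma mat_commute_sym: "mat_commute X Y \<Longrightarrow> mat_commute Y X"
  by (simp add: mat_commute_def)

lemma mat_commute_refl [simp]: "mat_commute X X"
  by (simp add: mat_commute_def)

lemma mat_commute_mult: "mat_commute X Y \<Longrightarrow> mat_commute X Z \<Longrightarrow> mat_commute X (Y ** Z)"
  by (simp add: mat_commute_def matrix_mul_assoc) (metis matrix_mul_assoc)

lemma mat_commute_mat_1 [simp]: "mat_commute X (mat 1)"
  by (simp add: mat_commute_def)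

lemma mat_commute_add: "mat_commute X Y \<Longrightarrow> mat_commute X Z \<Longrightarrow> mat_commute X (Y + Z)"
  by (simp add: mat_commute_def matrix_add_ldistrib matrix_add_rdistrib)

lemma mat_commute_neg: "mat_commute X Y \<Longrightarrow> mat_commute X (- Y :: 'a::ring_1^'n^'n)"
  by (simp add: mat_commute_def matrix_neg_right vec_eq_iff matrix_matrix_mult_def sum_negf)

lemma mat_commute_qscale: "mat_commute X Y \<Longrightarrow> mat_commute X (qscale_mat q Y)"
  by (simp add: mat_commute_def qscale_mat_mult_left qscale_mat_mult_right)

lemma mat_commute_sum: "(\<And>i. i \<in> I \<Longrightarrow> mat_commute X (f i)) \<Longrightarrow> mat_commute X (\<Sum>i\<in>I. f i)"
  by (simp add: mat_commute_def matrix_sum_left matrix_sum_right)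

lemma mat_commute_mat_pow: "mat_commute X Y \<Longrightarrow> mat_commute X (mat_pow Y k)"
  by (induct k) (simp_all add: mat_pow_Suc mat_commute_mult)

lemma mat_commute_poly:
  "mat_commute A (\<Sum>j\<in>J. qscale_mat (f j) (mat_pow A j))"
  by (intro mat_commute_sum mat_commute_qscale mat_commute_mat_pow mat_commute_refl)

lemma mat_pow_mult_commute:
  assumes "mat_commute X Y"
  shows "mat_pow (X ** Y) k = mat_pow X k ** mat_pow Y k"
proof (induct k)
  case (Suc k)
  have "Y ** mat_pow X k = mat_pow X k ** Y"
    using mat_commute_mat_pow[OF mat_commute_sym[OF assms]] by (simp add: mat_commute_def)
  then show ?case
    using Suc by (simp add: mat_pow_Suc matrix_mul_assoc) (metis matrix_mul_assoc)
qed simp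

lemma mat_pow_one_plus_nilpotent:
  assumes nil: "mat_pow N K = (0 :: 'a::{division_ring,ring_char_0}^'n^'n)"
  shows "mat_pow (mat 1 + N) t = (\<Sum>j<K. qscale_mat (of_nat (t choose j)) (mat_pow N j))"
proof (induct t)
  case 0
  show ?case
    using nil by (cases K) (simp_all add: sum.lessThan_Suc_shift vec_eq_iff del: sum.lessThan_Suc)
next
  case (Suc t)
  define h where "h j = (if j = 0 then 0 else qscale_mat (of_nat (t choose (j - 1))) (mat_pow N j))" for j
  have "N ** (\<Sum>j<K. qscale_mat (of_nat (t choose j)) (mat_pow N j)) = (\<Sum>j<K. h (Suc j))"
    by (simp add: h_def matrix_sum_right qscale_mat_mult_right mat_pow_Suc)
  also have "\<dots> = (\<Sum>j<Suc K. h j)"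
    using sum.lessThan_Suc_shift[of h K] by (simp add: h_def)
  also have "\<dots> = (\<Sum>j<K. h j)"
    using nil by (simp add: h_def)
  finally have shift: "N ** (\<Sum>j<K. qscale_mat (of_nat (t choose j)) (mat_pow N j)) = (\<Sum>j<K. h j)" .
  have "mat_pow (mat 1 + N) (Suc t)
      = (\<Sum>j<K. qscale_mat (of_nat (t choose j)) (mat_pow N j) + h j)"
    by (simp add: mat_pow_Suc Suc matrix_add_rdistrib shift sum.distrib)
  also have "\<dots> = (\<Sum>j<K. qscale_mat (of_nat (Suc t choose j)) (mat_pow N j))"
    by (rule sum.cong) (auto simp: h_def QM.scale_left_distrib[symmetric] gr0_conv_Suc)
  finally show ?case .
qed

section \<open>The logarithm of a unipotent matrix\<close>

lemma poly_combination_coeff_eq: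
  fixes s :: "'c::field_char_0 \<Rightarrow> 'b::ab_group_add \<Rightarrow> 'b"
  assumes "vector_space s"
    and eq: "\<And>t::nat. (\<Sum>i\<in>I. s (poly (P i) (of_nat t)) (A i)) = (\<Sum>j\<in>J. s (poly (Q j) (of_nat t)) (B j))"
  shows "(\<Sum>i\<in>I. s (coeff (P i) k) (A i)) = (\<Sum>j\<in>J. s (coeff (Q j) k) (B j))"
proof -
  interpret V: vector_space s by fact
  obtain Bs where Bs: "V.independent Bs" "UNIV \<subseteq> V.span Bs"
    using V.basis_exists[of UNIV] by blast
  have sp: "x \<in> V.span Bs" for x
    using Bs by auto
  let ?r = "V.representation Bs"
  have r_comb: "?r (\<Sum>i\<in>I. s (c i) (A i)) b = (\<Sum>i\<in>I. c i * ?r (A i) b)" for c I A b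
    by (simp add: V.representation_sum[OF Bs(1) sp] V.representation_scale[OF Bs(1) sp])
  let ?L = "\<Sum>i\<in>I. s (coeff (P i) k) (A i)" and ?R = "\<Sum>j\<in>J. s (coeff (Q j) k) (B j)"
  have "?r (?L - ?R) b = 0" for b
  proof -
    define p where "p = (\<Sum>i\<in>I. smult (?r (A i) b) (P i)) - (\<Sum>j\<in>J. smult (?r (B j) b) (Q j))"
    have "poly p (of_nat t) = 0" for t
      using arg_cong[OF eq[of t], of "\<lambda>x. ?r x b"]
      by (simp add: p_def poly_sum r_comb mult.commute)
    then have "range of_nat \<subseteq> {x. poly p x = 0}"
      by auto
    moreover have "infinite (range (of_nat :: nat \<Rightarrow> 'c))"
      by (simp add: infinite_UNIV_char_0 range_inj_infinite inj_of_nat)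
    ultimately have "p = 0"
      using poly_roots_finite finite_subset by blast
    then have "coeff p k = 0"
      by simp
    then show ?thesis
      by (simp add: p_def coeff_sum V.representation_diff[OF Bs(1) sp sp] r_comb mult.commute)
  qed
  then have "?L - ?R = 0"
    using V.sum_nonzero_representation_eq[OF Bs(1) sp, of "?L - ?R"] by simp
  then show ?thesis
    by simp
qed

definition binom_poly :: "nat \<Rightarrow> rat poly" where
  "binom_poly j = smult (1 / fact j) (\<Prod>i<j. [:- of_nat i, 1:])"

lemma poly_binom_poly: "poly (binom_poly j) (of_nat t) = of_nat (t choose j)"
  by (simp add: binom_poly_def poly_prod binomial_gbinomial gbinomial_prod_rev atLeast0LessThan)

lemma coeff_0_binom_poly: "coeff (binom_poly j) 0 = (if j = 0 then 1 else 0)"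
  using poly_binom_poly[of j 0] by (simp add: poly_0_coeff_0)

text \<open>\<open>log_coeff j = (-1)^(j-1)/j\<close> for \<open>j > 0\<close>, the coefficients of the logarithm series.\<close>
definition log_coeff :: "nat \<Rightarrow> rat" where
  "log_coeff j = coeff (binom_poly j) 1"

lemma log_coeff_0 [simp]: "log_coeff 0 = 0"
  by (simp add: log_coeff_def binom_poly_def)

lemma log_coeff_Suc_0 [simp]: "log_coeff (Suc 0) = 1"
  by (simp add: log_coeff_def binom_poly_def)

lemma coeff_1_binom_poly_mult:
  "coeff (binom_poly j * binom_poly k) 1
     = (if j = 0 then log_coeff k else 0) + (if k = 0 then log_coeff j else 0)"
  by (simp add: coeff_mult coeff_0_binom_poly log_coeff_def)

definition mat_log :: "'a::{division_ring,ring_char_0}^'n^'n \<Rightarrow> 'a^'n^'n" where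
  "mat_log X = (\<Sum>j < (LEAST m. mat_pow (X - mat 1) m = 0). qscale_mat (log_coeff j) (mat_pow (X - mat 1) j))"

lemma mat_log_eq:
  assumes K: "mat_pow (X - mat 1) K = 0"
  shows "mat_log X = (\<Sum>j<K. qscale_mat (log_coeff j) (mat_pow (X - mat 1) j))"
proof -
  define L where "L = (LEAST m. mat_pow (X - mat 1) m = 0)"
  have "mat_pow (X - mat 1) L = 0" "L \<le> K"
    unfolding L_def by (rule LeastI[of _ K], rule K, rule Least_le, rule K)
  then have "(\<Sum>j<K. qscale_mat (log_coeff j) (mat_pow (X - mat 1) j))
      = (\<Sum>j<L. qscale_mat (log_coeff j) (mat_pow (X - mat 1) j))"
    by (intro sum.mono_neutral_right) (auto dest: mat_pow_eq_0_mono)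
  then show ?thesis
    by (simp add: mat_log_def L_def)
qed

lemma mat_pow_binom_poly:
  assumes "mat_pow (X - mat 1) K = (0 :: 'a::{division_ring,ring_char_0}^'n^'n)"
  shows "mat_pow X t = (\<Sum>j<K. qscale_mat (poly (binom_poly j) (of_nat t)) (mat_pow (X - mat 1) j))"
  using mat_pow_one_plus_nilpotent[OF assms, of t] by (simp add: poly_binom_poly)

lemma mat_log_mult:
  fixes X Y :: "'a::{division_ring,ring_char_0}^'n^'n"
  assumes XY: "mat_commute X Y"
    and a: "mat_pow (X - mat 1) K = 0" and b: "mat_pow (Y - mat 1) K = 0"
    and c: "mat_pow (X ** Y - mat 1) K = 0"
  shows "mat_log (X ** Y) = mat_log X + mat_log Y"
proof -
  let ?a = "mat_pow (X - mat 1)" and ?b = "mat_pow (Y - mat 1)" and ?c = "mat_pow (X ** Y - mat 1)"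
  let ?I = "{..<K} \<times> {..<K}"
  have K: "0 < K"
    using mat_pow_eq_0_pos[OF a] .
  have "(\<Sum>m<K. qscale_mat (poly (binom_poly m) (of_nat t)) (?c m))
      = (\<Sum>(j, k)\<in>?I. qscale_mat (poly (binom_poly j * binom_poly k) (of_nat t)) (?a j ** ?b k))"
    for t :: nat
  proof -
    have "(\<Sum>m<K. qscale_mat (poly (binom_poly m) (of_nat t)) (?c m)) = mat_pow X t ** mat_pow Y t"
      using mat_pow_binom_poly[OF c] mat_pow_mult_commute[OF XY] by simp
    also have "\<dots> = (\<Sum>j<K. \<Sum>k<K. qscale_mat (poly (binom_poly j * binom_poly k) (of_nat t)) (?a j ** ?b k))"
      unfolding mat_pow_binom_poly[OF a] mat_pow_binom_poly[OF b] matrix_sum_left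
      by (simp add: matrix_sum_right qscale_mat_mult_left qscale_mat_mult_right QM.scale_scale mult.commute)
    finally show ?thesis
      by (simp add: sum.cartesian_product)
  qed
  then have "(\<Sum>m<K. qscale_mat (log_coeff m) (?c m))
      = (\<Sum>(j, k)\<in>?I. qscale_mat (coeff (binom_poly j * binom_poly k) 1) (?a j ** ?b k))"
    unfolding log_coeff_def split_def
    by (rule poly_combination_coeff_eq[OF QM.vector_space_axioms])
  also have "\<dots> = (\<Sum>(j, k)\<in>?I. if j = 0 then qscale_mat (log_coeff k) (?b k) else 0)
      + (\<Sum>(j, k)\<in>?I. if k = 0 then qscale_mat (log_coeff j) (?a j) else 0)"
  proof -
    have "qscale_mat (coeff (binom_poly j * binom_poly k) 1) (?a j ** ?b k)
        = (if j = 0 then qscale_mat (log_coeff k) (?b k) else 0)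
          + (if k = 0 then qscale_mat (log_coeff j) (?a j) else 0)" for j k
      unfolding coeff_1_binom_poly_mult by (simp add: QM.scale_left_distrib)
    then show ?thesis
      by (simp add: sum.distrib[symmetric] split_def)
  qed
  also have "\<dots> = (\<Sum>k<K. qscale_mat (log_coeff k) (?b k)) + (\<Sum>j<K. qscale_mat (log_coeff j) (?a j))"
    using K by (subst (1 2) sum.cartesian_product[symmetric], subst sum.swap) simp
  finally show ?thesis
    by (simp add: mat_log_eq[OF a] mat_log_eq[OF b] mat_log_eq[OF c] add.commute)
qed

lemma mat_log_factor:
  assumes "mat_pow (X - mat 1) K = 0"
  obtains V where "mat_log X = (X - mat 1) ** (mat 1 + (X - mat 1) ** V)"
    and "mat_commute (X - mat 1) V"
proof
  let ?a = "X - mat 1"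
  let ?V = "\<Sum>j<K. qscale_mat (log_coeff (Suc (Suc j))) (mat_pow ?a j)"
  have "mat_pow ?a (Suc (Suc K)) = 0"
    using mat_pow_eq_0_mono[OF assms] by simp
  then have "mat_log X = (\<Sum>j<Suc (Suc K). qscale_mat (log_coeff j) (mat_pow ?a j))"
    by (rule mat_log_eq)
  also have "\<dots> = ?a + (\<Sum>j<K. qscale_mat (log_coeff (Suc (Suc j))) (mat_pow ?a (Suc (Suc j))))"
    by (simp only: sum.lessThan_Suc_shift) (simp add: mat_pow_Suc)
  also have "\<dots> = ?a ** (mat 1 + ?a ** ?V)"
    by (simp add: matrix_add_ldistrib matrix_sum_right qscale_mat_mult_right mat_pow_Suc matrix_mul_assoc)
  finally show "mat_log X = ?a ** (mat 1 + ?a ** ?V)" .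
  show "mat_commute ?a ?V"
    by (rule mat_commute_poly)
qed

lemma mat_log_nilpotent:
  assumes "mat_pow (X - mat 1) K = 0"
  shows "mat_pow (mat_log X) K = 0"
proof -
  obtain V where V: "mat_log X = (X - mat 1) ** (mat 1 + (X - mat 1) ** V)"
    and "mat_commute (X - mat 1) V"
    using mat_log_factor[OF assms] .
  then have "mat_commute (X - mat 1) (mat 1 + (X - mat 1) ** V)"
    by (intro mat_commute_add mat_commute_mult mat_commute_mat_1 mat_commute_refl)
  then show ?thesis
    using assms by (simp add: V mat_pow_mult_commute)
qed

lemma mat_log_mult_vec_eq_0:
  assumes "mat_pow (X - mat 1) K = 0" and "(X - mat 1) *v v = 0"
  shows "mat_log X *v v = 0"
proof -
  obtain V where V: "mat_log X = (X - mat 1) ** (mat 1 + (X - mat 1) ** V)"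
    and "mat_commute (X - mat 1) V"
    using mat_log_factor[OF assms(1)] .
  moreover have "mat_commute (X - mat 1) (mat 1 + (X - mat 1) ** V)"
    using \<open>mat_commute (X - mat 1) V\<close>
    by (intro mat_commute_add mat_commute_mult mat_commute_mat_1 mat_commute_refl)
  ultimately have "mat_log X = (mat 1 + (X - mat 1) ** V) ** (X - mat 1)"
    by (simp add: mat_commute_def)
  then show ?thesis
    using assms(2) by (simp flip: matrix_vector_mul_assoc)
qed

lemma mat_log_eq_0D:
  assumes K: "mat_pow (X - mat 1) K = 0" and log: "mat_log X = 0"
  shows "X = (mat 1 :: 'a::{division_ring,ring_char_0}^'n^'n)"
proof -
  let ?a = "X - mat 1"
  obtain V where "mat_log X = ?a ** (mat 1 + ?a ** V)" and "mat_commute ?a V"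
    using mat_log_factor[OF K] .
  then have a: "?a = ?a ** (?a ** - V)" and "mat_commute ?a (- V)"
    using log by (simp_all add: matrix_add_ldistrib matrix_neg_right eq_neg_iff_add_eq_0 mat_commute_neg)
  have "?a = ?a ** mat_pow (?a ** - V) m" for m
  proof (induct m)
    case (Suc m)
    then show ?case
      using a by (simp add: mat_pow_Suc matrix_mul_assoc)
  qed simp
  moreover have "mat_pow (?a ** - V) K = 0"
    using K by (simp add: mat_pow_mult_commute[OF \<open>mat_commute ?a (- V)\<close>])
  ultimately have "?a = 0"
    by (metis times0_right)
  then show ?thesis
    by simp
qed

lemma common_denominator:
  fixes q :: "'b \<Rightarrow> rat"
  assumes "finite S"
  shows "\<exists>m::int. m > 0 \<and> (\<exists>c. \<forall>v\<in>S. of_int m * q v = of_int (c v))"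
  using assms
proof (induct S rule: finite_induct)
  case empty
  show ?case
    by (auto intro: exI[of _ 1])
next
  case (insert x S)
  then obtain m c where m: "m > 0" "\<forall>v\<in>S. of_int m * q v = of_int (c v)"
    by blast
  obtain a b where ab: "quotient_of (q x) = (a, b)"
    by (cases "quotient_of (q x)")
  then have "b > 0" "q x = of_int a / of_int b"
    by (simp_all add: quotient_of_denom_pos quotient_of_div)
  then have "of_int b * q x = of_int a"
    by simp
  define d where "d v = (if v = x then m * a else b * c v)" for v
  have "\<forall>v\<in>insert x S. of_int (m * b) * q v = of_int (d v)"
    using m insert(2) \<open>of_int b * q x = of_int a\<close>
    by (auto simp: d_def mult.assoc mult.left_commute[of "of_int b"])
  moreover have "m * b > 0"
    using m(1) \<open>b > 0\<close> by simp
  ultimately show ?case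
    by blast
qed

context
  fixes s :: "rat \<Rightarrow> 'b::ab_group_add \<Rightarrow> 'b"
  assumes vs: "vector_space s"
begin

interpretation V: vector_space s by (fact vs)

lemma span_clear_denominators:
  assumes "finite B" and "x \<in> V.span B"
  shows "\<exists>m::int. m > 0 \<and> (\<exists>c. s (of_int m) x = (\<Sum>v\<in>B. s (of_int (c v)) v))"
proof -
  obtain u where x: "x = (\<Sum>v\<in>B. s (u v) v)"
    using assms V.span_finite by auto
  obtain m c where "m > 0" "\<forall>v\<in>B. of_int m * u v = of_int (c v)"
    using common_denominator[OF assms(1), of u] by blast
  then have "s (of_int m) x = (\<Sum>v\<in>B. s (of_int (c v)) v)"
    by (simp add: x V.scale_sum_right)
  then show ?thesis
    using \<open>m > 0\<close> by blast
qed

lemma independent_if_int_relations_trivial: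
  assumes "finite B"
    and int: "\<And>c. (\<Sum>v\<in>B. s (of_int (c v)) v) = 0 \<Longrightarrow> \<forall>v\<in>B. c v = 0"
  shows "V.independent B"
proof (rule V.independent_if_scalars_zero[OF assms(1)])
  fix u v
  assume u: "(\<Sum>v\<in>B. s (u v) v) = 0" and v: "v \<in> B"
  obtain m c where m: "m > 0" "\<forall>v\<in>B. of_int m * u v = of_int (c v)"
    using common_denominator[OF assms(1), of u] by blast
  then have "(\<Sum>v\<in>B. s (of_int (c v)) v) = s (of_int m) (\<Sum>v\<in>B. s (u v) v)"
    by (simp add: V.scale_sum_right)
  then have "c v = 0"
    using int u v by simp
  then show "u v = 0"
    using m v by force
qed

end

section \<open>Logarithms on a unipotent abelian subgroup\<close>

lemma group_GL: "group (GL :: ('a::semiring_1^'n^'n) monoid)"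
proof (rule groupI)
  fix x y :: "'a^'n^'n"
  assume "x \<in> carrier GL" "y \<in> carrier GL"
  then obtain x' y' where "x ** x' = mat 1" "x' ** x = mat 1" "y ** y' = mat 1" "y' ** y = mat 1"
    by (auto simp: GL_def invertible_def)
  then have "(x ** y) ** (y' ** x') = mat 1" "(y' ** x') ** (x ** y) = mat 1"
    by (metis matrix_mul_assoc matrix_mul_lid)+
  then show "x \<otimes>\<^bsub>GL\<^esub> y \<in> carrier GL"
    by (auto simp: GL_def invertible_def)
next
  fix x :: "'a^'n^'n"
  assume "x \<in> carrier GL"
  then obtain x' where "x ** x' = mat 1" "x' ** x = mat 1"
    by (auto simp: GL_def invertible_def)
  then show "\<exists>y\<in>carrier GL. y \<otimes>\<^bsub>GL\<^esub> x = \<one>\<^bsub>GL\<^esub>"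
    by (auto simp: GL_def invertible_def intro!: bexI[of _ x'])
next
  show "\<one>\<^bsub>GL\<^esub> \<in> carrier (GL :: ('a^'n^'n) monoid)"
    using matrix_mul_lid[of "mat 1 :: 'a^'n^'n"] by (auto simp: GL_def invertible_def)
qed (simp_all add: GL_def matrix_mul_assoc)

lemma mat_log_mat_1 [simp]: "mat_log (mat 1 :: 'a::{division_ring,ring_char_0}^'n^'n) = 0"
  using mat_log_eq[of "mat 1" 1] by (simp add: mat_pow_Suc)

locale unipotent_abelian_subgroup =
  fixes S :: "('a::{division_ring,ring_char_0}^'n^'n) set"
  assumes subgroup: "subgroup S GL"
    and commute: "\<forall>A\<in>S. \<forall>B\<in>S. A ** B = B ** A"
    and unipotent: "\<forall>A\<in>S. unipotent_mat A"
begin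

abbreviation "G \<equiv> GL\<lparr>carrier := S\<rparr>"

lemma G_simps [simp]: "carrier G = S" "mult G = (**)" "one G = mat 1"
  by (simp_all add: GL_def)

lemma comm_group_G: "comm_group G"
proof -
  interpret group G
    by (rule subgroup.subgroup_is_group[OF subgroup group_GL])
  show ?thesis
    by (rule group_comm_groupI) (use commute in simp)
qed

sublocale comm_group G
  by (rule comm_group_G)

lemma S_closed [simp]:
  "A \<in> S \<Longrightarrow> B \<in> S \<Longrightarrow> A ** B \<in> S"
  "A \<in> S \<Longrightarrow> inv\<^bsub>G\<^esub> A \<in> S"
  "A \<in> S \<Longrightarrow> A [^]\<^bsub>G\<^esub> (k::nat) \<in> S"
  "A \<in> S \<Longrightarrow> A [^]\<^bsub>G\<^esub> (l::int) \<in> S"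
  "f \<in> I \<rightarrow> S \<Longrightarrow> finprod G f I \<in> S"
  using m_closed[of A B] inv_closed[of A] nat_pow_closed[of A k] int_pow_closed[of A l]
    finprod_closed[of f I]
  by simp_all

lemma nilpotent_minus_mat_1: "A \<in> S \<Longrightarrow> \<exists>K. mat_pow (A - mat 1) K = 0"
  using unipotent by (auto simp: unipotent_mat_def nilpotent_mat_iff_mat_pow)

lemma common_nilpotency_index:
  assumes "A \<in> S" "B \<in> S" "C \<in> S"
  obtains K where "mat_pow (A - mat 1) K = 0" "mat_pow (B - mat 1) K = 0" "mat_pow (C - mat 1) K = 0"
proof -
  obtain K1 K2 K3 where "mat_pow (A - mat 1) K1 = 0" "mat_pow (B - mat 1) K2 = 0" "mat_pow (C - mat 1) K3 = 0"
    using nilpotent_minus_mat_1 assms by meson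
  then show ?thesis
    by (intro that[of "K1 + K2 + K3"]) (auto elim: mat_pow_eq_0_mono)
qed

lemma log_mult:
  assumes "A \<in> S" "B \<in> S"
  shows "mat_log (A ** B) = mat_log A + mat_log B"
proof -
  obtain K where "mat_pow (A - mat 1) K = 0" "mat_pow (B - mat 1) K = 0"
    "mat_pow (A ** B - mat 1) K = 0"
    by (rule common_nilpotency_index[of A B "A ** B"]) (simp_all add: assms)
  moreover have "mat_commute A B"
    using commute assms by (simp add: mat_commute_def)
  ultimately show ?thesis
    by (intro mat_log_mult)
qed

lemma log_inv: "A \<in> S \<Longrightarrow> mat_log (inv\<^bsub>G\<^esub> A) = - mat_log A"
  using log_mult[of A "inv\<^bsub>G\<^esub> A"] r_inv[of A] by (simp add: eq_neg_iff_add_eq_0 add.commute)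

lemma log_nat_pow: "A \<in> S \<Longrightarrow> mat_log (A [^]\<^bsub>G\<^esub> (k::nat)) = qscale_mat (of_nat k) (mat_log A)"
  by (induct k) (simp_all add: log_mult QM.scale_left_distrib)

lemma log_int_pow:
  assumes "A \<in> S"
  shows "mat_log (A [^]\<^bsub>G\<^esub> (k::int)) = qscale_mat (of_int k) (mat_log A)"
proof (cases "k < 0")
  case True
  then have "A [^]\<^bsub>G\<^esub> k = inv\<^bsub>G\<^esub> (A [^]\<^bsub>G\<^esub> nat (- k))"
    by (subst int_pow_def2) simp
  then have "mat_log (A [^]\<^bsub>G\<^esub> k) = - qscale_mat (of_nat (nat (- k))) (mat_log A)"
    using assms by (simp add: log_inv log_nat_pow)
  moreover have "(of_int k :: rat) = - of_nat (nat (- k))"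
    using True by simp
  ultimately show ?thesis
    by (simp only: QM.scale_minus_left)
next
  case False
  then have "A [^]\<^bsub>G\<^esub> k = A [^]\<^bsub>G\<^esub> nat k"
    by (subst int_pow_def2) simp
  then have "mat_log (A [^]\<^bsub>G\<^esub> k) = qscale_mat (of_nat (nat k)) (mat_log A)"
    using assms by (simp only: log_nat_pow)
  then show ?thesis
    using False by simp
qed

lemma log_finprod: "finite I \<Longrightarrow> f \<in> I \<rightarrow> S \<Longrightarrow> mat_log (finprod G f I) = (\<Sum>i\<in>I. mat_log (f i))"
  by (induct I rule: finite_induct) (auto simp: log_mult Pi_def)

lemma log_finprod_int_pow:
  assumes "finite T" "T \<subseteq> S"
  shows "mat_log (finprod G (\<lambda>a. a [^]\<^bsub>G\<^esub> c a) T) = (\<Sum>a\<in>T. qscale_mat (of_int (c a)) (mat_log a))"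
  using assms by (subst log_finprod) (auto simp: log_int_pow intro!: sum.cong)

lemma log_eq_0D: "A \<in> S \<Longrightarrow> mat_log A = 0 \<Longrightarrow> A = mat 1"
  using nilpotent_minus_mat_1 mat_log_eq_0D by blast

lemma finprod_int_pow_closed: "T \<subseteq> S \<Longrightarrow> finprod G (\<lambda>a. a [^]\<^bsub>G\<^esub> (c a :: int)) T \<in> S"
  by (intro S_closed(5) Pi_I S_closed(4)) auto

lemma log_nilpotent: "A \<in> S \<Longrightarrow> \<exists>K. mat_pow (mat_log A) K = 0"
  using nilpotent_minus_mat_1 mat_log_nilpotent by blast

lemma Z_indep_log_relation_trivial:
  assumes T: "Z_indep G T" and rel: "(\<Sum>a\<in>T. qscale_mat (of_int (c a)) (mat_log a)) = 0"
  shows "\<forall>a\<in>T. c a = 0"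
proof -
  have fin: "finite T" and sub: "T \<subseteq> S"
    using T by (auto simp: Z_indep_def)
  then have "mat_log (finprod G (\<lambda>a. a [^]\<^bsub>G\<^esub> c a) T) = 0"
    using rel by (simp add: log_finprod_int_pow)
  then have "finprod G (\<lambda>a. a [^]\<^bsub>G\<^esub> c a) T = mat 1"
    using sub by (intro log_eq_0D finprod_int_pow_closed)
  then show ?thesis
    using T by (simp add: Z_indep_def)
qed

lemma Z_indep_inj_on_log:
  assumes T: "Z_indep G T"
  shows "inj_on mat_log T"
proof (rule inj_onI, rule ccontr)
  fix a b
  assume ab: "a \<in> T" "b \<in> T" "mat_log a = mat_log b" "a \<noteq> b"
  define c where "c g = (if g = a then 1 else if g = b then -1 else 0 :: int)" for g
  have "finite T"
    using T by (simp add: Z_indep_def)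
  then have "(\<Sum>g\<in>T. qscale_mat (of_int (c g)) (mat_log g))
      = (\<Sum>g\<in>T. (if g = a then mat_log a else 0) - (if g = b then mat_log b else 0))"
    by (intro sum.cong) (auto simp: c_def ab(4))
  also have "\<dots> = 0"
    using ab \<open>finite T\<close> by (simp add: sum_subtractf)
  finally have "c a = 0"
    using Z_indep_log_relation_trivial[OF T] ab(1) by blast
  then show False
    by (simp add: c_def)
qed

lemma Z_indep_independent_log:
  assumes T: "Z_indep G T"
  shows "QM.independent (mat_log ` T)"
proof (rule independent_if_int_relations_trivial[OF QM.vector_space_axioms])
  show "finite (mat_log ` T)"
    using T by (simp add: Z_indep_def)
  fix c :: "'a^'n^'n \<Rightarrow> int"
  assume "(\<Sum>v\<in>mat_log ` T. qscale_mat (of_int (c v)) v) = 0"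
  then have "(\<Sum>a\<in>T. qscale_mat (of_int (c (mat_log a))) (mat_log a)) = 0"
    by (simp add: sum.reindex[OF Z_indep_inj_on_log[OF T]])
  then show "\<forall>v\<in>mat_log ` T. c v = 0"
    using Z_indep_log_relation_trivial[OF T, of "c \<circ> mat_log"] by simp
qed

lemma Z_indep_span_log_nilpotent:
  assumes T: "Z_indep G T" and Z: "Z \<in> QM.span (mat_log ` T)"
  shows "\<exists>M. mat_pow Z M = 0"
proof -
  have fin: "finite T" and sub: "T \<subseteq> S"
    using T by (auto simp: Z_indep_def)
  obtain m c where "m > 0"
    and mZ: "qscale_mat (of_int m) Z = (\<Sum>v\<in>mat_log ` T. qscale_mat (of_int (c v)) v)"
    using span_clear_denominators[OF QM.vector_space_axioms _ Z] fin by blast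
  define P where "P = finprod G (\<lambda>a. a [^]\<^bsub>G\<^esub> c (mat_log a)) T"
  have "qscale_mat (of_int m) Z = (\<Sum>a\<in>T. qscale_mat (of_int (c (mat_log a))) (mat_log a))"
    using mZ by (simp add: sum.reindex[OF Z_indep_inj_on_log[OF T]])
  also have "\<dots> = mat_log P"
    unfolding P_def by (rule log_finprod_int_pow[symmetric, OF fin sub])
  finally have mZ: "qscale_mat (of_int m) Z = mat_log P" .
  obtain M where "mat_pow (mat_log P) M = 0"
    using log_nilpotent[OF finprod_int_pow_closed[OF sub, of "\<lambda>a. c (mat_log a)"]]
    by (auto simp: P_def)
  then have "mat_pow (qscale_mat (of_int m) Z) M = 0"
    by (simp only: mZ)
  then show ?thesis
    using \<open>m > 0\<close> by (auto simp: mat_pow_qscale)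
qed

end

section \<open>Right linear algebra over the division ring\<close>

definition rscale :: "'a::semiring_1^'n \<Rightarrow> 'a \<Rightarrow> 'a^'n" where
  "rscale v c = (\<chi> i. v $ i * c)"

definition rspan :: "('a::semiring_1^'n) set \<Rightarrow> ('a^'n) set" where
  "rspan S = range (\<lambda>c. \<Sum>v\<in>S. rscale v (c v))"

lemma rscale_nth [simp]: "rscale v c $ i = v $ i * c"
  by (simp add: rscale_def)

lemma rscale_add_right: "rscale v (x + y) = rscale v x + rscale v y"
  by (simp add: vec_eq_iff distrib_left)

lemma rscale_sum_left: "rscale (\<Sum>i\<in>I. f i) c = (\<Sum>i\<in>I. rscale (f i) c)"
  by (simp add: vec_eq_iff sum_distrib_right)

lemma rscale_sum_right: "rscale v (\<Sum>i\<in>I. f i) = (\<Sum>i\<in>I. rscale v (f i))"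
  by (simp add: vec_eq_iff sum_distrib_left)

lemma rscale_rscale: "rscale (rscale v x) y = rscale v (x * y)"
  by (simp add: vec_eq_iff mult.assoc)

lemma rscale_0 [simp]: "rscale v 0 = 0" "rscale 0 c = 0"
  by (simp_all add: vec_eq_iff)

lemma rscale_1 [simp]: "rscale v 1 = v"
  by (simp add: vec_eq_iff)

lemma rscale_diff_right: "rscale v (x - y) = rscale v x - rscale (v :: 'a::ring_1^'n) y"
  by (simp add: vec_eq_iff right_diff_distrib)

lemma qscale_rscale: "qscale_vec q (rscale v x) = rscale v (rat_scale q x)"
  by (simp add: vec_eq_iff rat_scale_eq) (metis rat_embed_central mult.assoc)

lemma matrix_vector_mult_rscale: "M *v rscale v c = rscale (M *v v) c"
  by (simp add: vec_eq_iff matrix_vector_mult_def sum_distrib_right mult.assoc)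

lemma right_indep_iff:
  "right_indep S \<longleftrightarrow> finite S \<and> (\<forall>c. (\<Sum>v\<in>S. rscale v (c v)) = 0 \<longrightarrow> (\<forall>v\<in>S. c v = 0))"
  by (simp add: right_indep_def rscale_def)

lemma right_indep_finite: "right_indep S \<Longrightarrow> finite S"
  by (simp add: right_indep_iff)

lemma right_indep_zero:
  "right_indep S \<Longrightarrow> (\<Sum>v\<in>S. rscale v (c v)) = 0 \<Longrightarrow> v \<in> S \<Longrightarrow> c v = 0"
  by (simp add: right_indep_iff)

lemma sum_rscale_delta:
  "finite S \<Longrightarrow> v \<in> S \<Longrightarrow> (\<Sum>w\<in>S. rscale w (if w = v then x else 0)) = rscale v x"
  by (simp add: if_distrib[of "rscale _"] cong: if_cong)

lemma right_indep_nonzero: "right_indep S \<Longrightarrow> v \<in> S \<Longrightarrow> v \<noteq> (0 :: 'a::ring_1^'n)"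
  using right_indep_zero[of S "\<lambda>w. if w = v then 1 else 0" v] sum_rscale_delta[of S v 1]
  by (auto simp: right_indep_finite)

lemma rscale_mem_rspan: "finite S \<Longrightarrow> v \<in> S \<Longrightarrow> rscale v x \<in> rspan S"
  unfolding rspan_def using sum_rscale_delta[of S v x] by (metis rangeI)

lemma matrix_vector_mult_rspan_eq_0:
  assumes "\<forall>v\<in>S. M *v v = 0" and "x \<in> rspan S"
  shows "M *v x = 0"
  using assms by (auto simp: rspan_def matrix_vector_mult_sum_right matrix_vector_mult_rscale)

lemma right_indep_insert:
  fixes S :: "('a::division_ring^'n) set"
  assumes S: "right_indep S" and u: "u \<notin> rspan S"
  shows "right_indep (insert u S)"
proof -
  have fin: "finite S"
    using S by (rule right_indep_finite)
  have "u \<notin> S"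
    using u rscale_mem_rspan[OF fin, of u 1] by auto
  show ?thesis
    unfolding right_indep_iff
  proof (intro conjI allI impI)
    fix c
    assume "(\<Sum>v\<in>insert u S. rscale v (c v)) = 0"
    then have sum: "rscale u (c u) = - (\<Sum>v\<in>S. rscale v (c v))"
      using fin \<open>u \<notin> S\<close> by (simp add: eq_neg_iff_add_eq_0)
    have "c u = 0"
    proof (rule ccontr)
      assume "c u \<noteq> 0"
      then have "u = rscale (rscale u (c u)) (inverse (c u))"
        by (simp add: rscale_rscale)
      also have "\<dots> = (\<Sum>v\<in>S. rscale v (- c v * inverse (c u)))"
        by (simp add: sum rscale_sum_left rscale_rscale vec_eq_iff sum_negf sum_distrib_right mult.assoc)
      finally have "u \<in> rspan S"
        unfolding rspan_def by (rule range_eqI[where x = "\<lambda>v. - c v * inverse (c u)"])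
      then show False
        using u by contradiction
    qed
    then have "(\<Sum>v\<in>S. rscale v (c v)) = 0"
      using sum by simp
    then show "\<forall>v\<in>insert u S. c v = 0"
      using \<open>c u = 0\<close> right_indep_zero[OF S] by blast
  qed (simp add: fin)
qed

definition std_basis :: "('a::semiring_1^'n) set" where
  "std_basis = range (\<lambda>j. axis j 1)"

lemma finite_std_basis [simp]: "finite (std_basis :: ('a::semiring_1^'n) set)"
  by (simp add: std_basis_def)

lemma inj_axis_1: "inj (\<lambda>j::'n::finite. axis j (1 :: 'a::zero_neq_one))"
  by (auto simp: inj_def axis_eq_axis)

lemma card_std_basis: "card (std_basis :: ('a::ring_1^'n) set) = CARD('n)"
  unfolding std_basis_def using card_image[OF inj_axis_1] by simp

lemma sum_std_basis:
  "(\<Sum>v\<in>(std_basis :: ('a::ring_1^'n) set). f v) = (\<Sum>j\<in>UNIV. f (axis j 1))"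
  unfolding std_basis_def by (simp add: sum.reindex[OF inj_axis_1])

lemma sum_rscale_axis: "(\<Sum>j\<in>UNIV. rscale (axis j 1) (x j)) = (\<chi> j. x j :: 'a::semiring_1^'n)"
  by (simp add: vec_eq_iff axis_def if_distrib[of "\<lambda>y. y * _"] cong: if_cong)

lemma right_indep_std_basis: "right_indep (std_basis :: ('a::ring_1^'n) set)"
  unfolding right_indep_iff
proof (intro conjI allI impI ballI)
  fix c and v :: "'a^'n"
  assume "(\<Sum>v\<in>(std_basis :: ('a^'n) set). rscale v (c v)) = 0" and "v \<in> std_basis"
  then have "(\<chi> j. c (axis j 1)) = (0 :: 'a^'n)"
    by (simp add: sum_std_basis sum_rscale_axis)
  then show "c v = 0"
    using \<open>v \<in> std_basis\<close> by (auto simp: vec_eq_iff std_basis_def)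
qed simp

lemma rspan_std_basis: "rspan (std_basis :: ('a::ring_1^'n) set) = UNIV"
proof -
  have "x \<in> rspan std_basis" for x :: "'a^'n"
    unfolding rspan_def
    by (rule range_eqI[where x = "\<lambda>v. x $ (SOME j. v = axis j 1)"])
       (simp add: sum_std_basis sum_rscale_axis axis_eq_axis)
  then show ?thesis
    by auto
qed

locale rat_basis = D: finite_dimensional_vector_space "rat_scale :: rat \<Rightarrow> 'a \<Rightarrow> 'a" Bd
  for Bd :: "'a::{division_ring,ring_char_0} set"
begin

text \<open>A \<open>\<rat>\<close>-basis of \<open>rspan S\<close> when \<open>S\<close> is right independent.\<close>
definition rat_frame :: "('a^'n) set \<Rightarrow> ('a^'n) set" where
  "rat_frame S = (\<lambda>(v, b). rscale v b) ` (S \<times> Bd)"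

lemma card_Bd_pos: "card Bd > 0"
proof -
  have "Bd \<noteq> {}"
  proof
    assume "Bd = {}"
    then have "(1 :: 'a) \<in> D.span {}"
      using D.span_Basis by simp
    then show False
      by simp
  qed
  then show ?thesis
    using D.finite_Basis by (simp add: card_gt_0_iff)
qed

lemma finite_rat_frame: "finite S \<Longrightarrow> finite (rat_frame S)"
  using D.finite_Basis by (simp add: rat_frame_def)

lemma rscale_mem_span_rat_frame:
  assumes "v \<in> S"
  shows "rscale v x \<in> QV.span (rat_frame S)"
proof -
  have "x \<in> D.span Bd"
    by (simp add: D.span_Basis)
  then show ?thesis
  proof (rule D.span_induct)
    show "D.subspace {x. rscale v x \<in> QV.span (rat_frame S)}"
      unfolding D.subspace_def
      by (auto simp: rscale_add_right QV.span_add QV.span_zero qscale_rscale[symmetric] QV.span_scale)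
  next
    fix b
    assume "b \<in> Bd"
    then have "rscale v b \<in> rat_frame S"
      using assms by (auto simp: rat_frame_def)
    then show "rscale v b \<in> QV.span (rat_frame S)"
      by (rule QV.span_base)
  qed
qed

lemma rspan_subset_span_rat_frame: "rspan S \<subseteq> QV.span (rat_frame S)"
  by (auto simp: rspan_def intro!: QV.span_sum rscale_mem_span_rat_frame)

lemma span_rat_frame_subset_rspan:
  assumes "finite S"
  shows "QV.span (rat_frame S) \<subseteq> rspan S"
proof (rule QV.span_minimal)
  show "rat_frame S \<subseteq> rspan S"
    using assms by (auto simp: rat_frame_def rscale_mem_rspan)
  show "QV.subspace (rspan S)"
    unfolding QV.subspace_def rspan_def
  proof (intro conjI ballI allI)
    show "0 \<in> range (\<lambda>c. \<Sum>v\<in>S. rscale v (c v))"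
      by (rule range_eqI[where x = "\<lambda>_. 0"]) simp
  next
    fix x y
    assume "x \<in> range (\<lambda>c. \<Sum>v\<in>S. rscale v (c v))" "y \<in> range (\<lambda>c. \<Sum>v\<in>S. rscale v (c v))"
    then obtain c d where "x = (\<Sum>v\<in>S. rscale v (c v))" "y = (\<Sum>v\<in>S. rscale v (d v))"
      by auto
    then show "x + y \<in> range (\<lambda>c. \<Sum>v\<in>S. rscale v (c v))"
      by (intro range_eqI[where x = "\<lambda>v. c v + d v"]) (simp add: rscale_add_right sum.distrib)
  next
    fix q x
    assume "x \<in> range (\<lambda>c. \<Sum>v\<in>S. rscale v (c v))"
    then obtain c where "x = (\<Sum>v\<in>S. rscale v (c v))"
      by auto
    then show "qscale_vec q x \<in> range (\<lambda>c. \<Sum>v\<in>S. rscale v (c v))"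
      by (intro range_eqI[where x = "\<lambda>v. rat_scale q (c v)"]) (simp add: QV.scale_sum_right qscale_rscale)
  qed
qed

lemma Bd_nonzero: "b \<in> Bd \<Longrightarrow> b \<noteq> 0"
  using D.independent_Basis D.dependent_zero by blast

lemma inj_on_rat_frame:
  assumes S: "right_indep S"
  shows "inj_on (\<lambda>(v, b). rscale v b) (S \<times> Bd)"
proof (rule inj_onI, clarify)
  fix v b v' b'
  assume mem: "v \<in> S" "b \<in> Bd" "v' \<in> S" "b' \<in> Bd" and eq: "rscale v b = rscale v' b'"
  define c where "c w = (if w = v then b else 0) - (if w = v' then b' else 0)" for w
  have "(\<Sum>w\<in>S. rscale w (c w)) = rscale v b - rscale v' b'"
    using mem right_indep_finite[OF S]
    by (simp add: c_def rscale_diff_right sum_subtractf sum_rscale_delta)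
  then have "c v = 0" "c v' = 0"
    using eq mem right_indep_zero[OF S] by simp_all
  then show "v = v' \<and> b = b'"
    using Bd_nonzero mem by (auto simp: c_def split: if_splits)
qed

lemma card_rat_frame: "right_indep S \<Longrightarrow> card (rat_frame S) = card S * card Bd"
  unfolding rat_frame_def by (simp add: card_image inj_on_rat_frame card_cartesian_product)

lemma independent_rat_frame:
  assumes S: "right_indep S"
  shows "QV.independent (rat_frame S)"
proof (rule QV.independent_if_scalars_zero)
  show "finite (rat_frame S)"
    using right_indep_finite[OF S] by (rule finite_rat_frame)
  fix f x
  assume sum0: "(\<Sum>x\<in>rat_frame S. qscale_vec (f x) x) = 0" and x: "x \<in> rat_frame S"
  have "(\<Sum>x\<in>rat_frame S. qscale_vec (f x) x)
      = (\<Sum>(v, b)\<in>S \<times> Bd. qscale_vec (f (rscale v b)) (rscale v b))"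
    unfolding rat_frame_def by (subst sum.reindex[OF inj_on_rat_frame[OF S]]) (simp add: comp_def split_def)
  also have "\<dots> = (\<Sum>v\<in>S. rscale v (\<Sum>b\<in>Bd. rat_scale (f (rscale v b)) b))"
    by (simp add: sum.cartesian_product[symmetric] rscale_sum_right qscale_rscale)
  finally have "(\<Sum>v\<in>S. rscale v (\<Sum>b\<in>Bd. rat_scale (f (rscale v b)) b)) = 0"
    using sum0 by simp
  moreover obtain v b where "v \<in> S" "b \<in> Bd" "x = rscale v b"
    using x by (auto simp: rat_frame_def)
  ultimately have "(\<Sum>b\<in>Bd. rat_scale (f (rscale v b)) b) = 0"
    using right_indep_zero[OF S, of "\<lambda>v. \<Sum>b\<in>Bd. rat_scale (f (rscale v b)) b"] by simp
  then show "f x = 0"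
    using D.independent_Basis \<open>b \<in> Bd\<close> \<open>x = rscale v b\<close>
    unfolding D.independent_explicit by (auto dest: spec[of _ "\<lambda>b. f (rscale v b)"])
qed

lemma finite_dimensional_vec:
  "finite_dimensional_vector_space qscale_vec (rat_frame (std_basis :: ('a^'n) set))"
proof
  show "finite (rat_frame (std_basis :: ('a^'n) set))"
    by (simp add: finite_rat_frame)
  show "QV.independent (rat_frame (std_basis :: ('a^'n) set))"
    by (intro independent_rat_frame right_indep_std_basis)
  show "QV.span (rat_frame (std_basis :: ('a^'n) set)) = UNIV"
    using rspan_subset_span_rat_frame[of std_basis] rspan_std_basis by auto
qed

lemma dim_vec: "QV.dim (UNIV :: ('a^'n) set) = CARD('n) * card Bd"
proof -
  interpret V: finite_dimensional_vector_space qscale_vec "rat_frame (std_basis :: ('a^'n) set)"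
    by (rule finite_dimensional_vec)
  show ?thesis
    by (simp add: card_rat_frame right_indep_std_basis card_std_basis)
qed

lemma right_indep_card_le:
  assumes "right_indep (S :: ('a^'n) set)"
  shows "card S \<le> CARD('n)"
proof -
  interpret V: finite_dimensional_vector_space qscale_vec "rat_frame (std_basis :: ('a^'n) set)"
    by (rule finite_dimensional_vec)
  have "card (rat_frame S) \<le> QV.dim (UNIV :: ('a^'n) set)"
    by (rule V.independent_card_le_dim) (simp_all add: independent_rat_frame assms)
  then have "card S * card Bd \<le> CARD('n) * card Bd"
    by (simp add: card_rat_frame[OF assms] card_rat_frame[OF right_indep_std_basis] card_std_basis)
  then show ?thesis
    using card_Bd_pos by simp
qed

lemma rspan_eq_UNIV:
  assumes "right_indep (B :: ('a^'n) set)" "card B = CARD('n)"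
  shows "rspan B = UNIV"
proof -
  interpret V: finite_dimensional_vector_space qscale_vec "rat_frame (std_basis :: ('a^'n) set)"
    by (rule finite_dimensional_vec)
  have "UNIV \<subseteq> QV.span (rat_frame B)"
    using assms by (intro V.card_ge_dim_independent independent_rat_frame)
      (simp_all add: card_rat_frame right_indep_std_basis card_std_basis)
  then show ?thesis
    using span_rat_frame_subset_rspan[OF right_indep_finite[OF assms(1)]] by auto
qed

lemma rspan_neq_UNIV:
  assumes "right_indep (S :: ('a^'n) set)" "card S < CARD('n)"
  shows "rspan S \<noteq> UNIV"
proof
  assume "rspan S = UNIV"
  then have "UNIV \<subseteq> QV.span (rat_frame S)"
    using rspan_subset_span_rat_frame by blast
  then have "QV.dim (UNIV :: ('a^'n) set) \<le> card (rat_frame S)"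
    by (intro QV.dim_le_card finite_rat_frame right_indep_finite assms)
  then show False
    using assms card_Bd_pos by (simp add: dim_vec card_rat_frame)
qed

lemma right_indep_extend:
  assumes "right_indep (S :: ('a^'n) set)"
  obtains B where "S \<subseteq> B" "right_indep B" "card B = CARD('n)"
proof -
  have "\<exists>B. S \<subseteq> B \<and> right_indep B \<and> card B = CARD('n)"
    if "right_indep S" "CARD('n) - card S = k" for k and S :: "('a^'n) set"
    using that
  proof (induct k arbitrary: S)
    case 0
    then show ?case
      using right_indep_card_le[of S] by auto
  next
    case (Suc k)
    then have "card S < CARD('n)"
      by simp
    then obtain u where u: "u \<notin> rspan S"
      using rspan_neq_UNIV[OF Suc(2)] by auto
    have "u \<notin> S"
      using u rscale_mem_rspan[OF right_indep_finite[OF Suc(2)], of u 1] by auto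
    then have "CARD('n) - card (insert u S) = k"
      using Suc(3) right_indep_finite[OF Suc(2)] by simp
    then show ?case
      using Suc(1)[OF right_indep_insert[OF Suc(2) u]] by blast
  qed
  then show ?thesis
    using assms that by blast
qed

lemma right_dim_attained:
  obtains S where "S \<subseteq> V" "right_indep S" "card S = right_dim (V :: ('a^'n) set)"
proof -
  let ?C = "{card S | S. S \<subseteq> V \<and> right_indep S}"
  have "?C \<subseteq> {..CARD('n)}"
    using right_indep_card_le by auto
  then have fin: "finite ?C"
    by (rule finite_subset) simp
  have ne: "?C \<noteq> {}"
    by (auto intro!: exI[of _ "{}"] simp: right_indep_def)
  have "Max ?C \<in> ?C"
    by (rule Max_in[OF fin ne])
  moreover have "right_dim V = Max ?C"
    unfolding right_dim_def by (rule cSup_eq_Max[OF fin ne])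
  ultimately show ?thesis
    using that by auto
qed

end

section \<open>Matrices killing a right independent set\<close>

lemma inj_matrix_mult_right_if_surj:
  assumes "surj ((*v) P)"
  shows "inj (\<lambda>X :: 'a::semiring_1^'n^'m. X ** P)"
proof (rule injI)
  fix X Y :: "'a^'n^'m"
  assume "X ** P = Y ** P"
  then have "X *v (P *v x) = Y *v (P *v x)" for x
    by (simp add: matrix_vector_mul_assoc)
  then show "X = Y"
    using assms by (intro matrix_eq_if_vector_mult_eq) (metis surjD)
qed

lemma axis_axis_add: "axis i (axis k (x + y)) = axis i (axis k x) + (axis i (axis k y) :: 'a::monoid_add^'n^'m)"
  by (simp add: vec_eq_iff axis_def)

lemma axis_axis_0: "axis i (axis k 0) = (0 :: 'a::zero^'n^'m)"
  by (simp add: vec_eq_iff axis_def)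

lemma qscale_axis_axis: "qscale_mat q (axis i (axis k x)) = axis i (axis k (rat_scale q x))"
  by (simp add: vec_eq_iff axis_def rat_scale_eq)

lemma matrix_eq_sum_axis_axis:
  fixes Y :: "'a::semiring_1^'n^'m"
  assumes "\<forall>i k. k \<notin> K \<longrightarrow> Y $ i $ k = 0"
  shows "Y = (\<Sum>(r, k)\<in>UNIV \<times> K. axis r (axis k (Y $ r $ k)))"
proof -
  have "(\<Sum>(r, k)\<in>UNIV \<times> K. axis r (axis k (Y $ r $ k))) $ i $ j
      = (\<Sum>p\<in>UNIV \<times> K. if p = (i, j) then Y $ i $ j else 0)" for i j
    unfolding sum_component by (intro sum.cong) (auto simp: axis_def split: if_splits)
  then show ?thesis
    using assms by (auto simp: vec_eq_iff)
qed

lemma module_hom_matrix_mult_right: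
  "module_hom qscale_mat qscale_mat (\<lambda>X :: 'a::{division_ring,ring_char_0}^'n^'n. X ** P)"
  unfolding module_hom_iff by (simp add: QM.module_axioms matrix_add_rdistrib qscale_mat_mult_left)

lemma single_column_notin_span_mult_nilpotent:
  fixes A :: "('a::{division_ring,ring_char_0}^'n^'n) set" and P :: "'a^'n^'n"
  assumes nil: "\<And>Z. Z \<in> QM.span A \<Longrightarrow> \<exists>M. mat_pow Z M = 0"
    and col: "P *v axis k0 1 = u" and "u \<noteq> 0"
  shows "(\<chi> i k. if k = k0 then u $ i else 0) \<notin> QM.span ((\<lambda>X. X ** P) ` A)"
proof
  assume "(\<chi> i k. if k = k0 then u $ i else 0) \<in> QM.span ((\<lambda>X. X ** P) ` A)"
  then obtain Z where Z: "Z \<in> QM.span A" "Z ** P = (\<chi> i k. if k = k0 then u $ i else 0)"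
    using module_hom.span_image[OF module_hom_matrix_mult_right[of P]] by auto
  have "Z *v u = (Z ** P) *v axis k0 1"
    by (simp add: col flip: matrix_vector_mul_assoc)
  also have "\<dots> = u"
    by (simp add: Z(2) vec_eq_iff matrix_vector_mult_axis)
  finally have "mat_pow Z m *v u = u" for m
    by (induct m) (simp_all add: mat_pow_Suc' flip: matrix_vector_mul_assoc)
  moreover obtain M where "mat_pow Z M = 0"
    using nil[OF Z(1)] by blast
  ultimately show False
    using \<open>u \<noteq> 0\<close> by (metis matrix_vector_mult_0)
qed

lemma card_preimage_compl:
  fixes g :: "'n::finite \<Rightarrow> 'b"
  assumes "bij_betw g UNIV B" "S \<subseteq> B"
  shows "card {k. g k \<notin> S} = CARD('n) - card S"
proof -
  have "bij_betw g {k. g k \<in> S} S"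
    using assms unfolding bij_betw_def by (auto simp: inj_on_def image_iff)
  moreover have "{k. g k \<notin> S} = UNIV - {k. g k \<in> S}"
    by auto
  ultimately show ?thesis
    by (simp add: card_Diff_subset bij_betw_same_card)
qed

context rat_basis
begin

lemma surj_matrix_of_columns:
  assumes "right_indep B" "card B = CARD('n)" "bij_betw g UNIV B"
  shows "surj ((*v) (\<chi> i k. g k $ i :: 'a^'n^'n))"
proof -
  have "y \<in> range ((*v) (\<chi> i k. g k $ i))" for y :: "'a^'n"
  proof -
    obtain c where "y = (\<Sum>v\<in>B. rscale v (c v))"
      using rspan_eq_UNIV[OF assms(1,2)] by (auto simp: rspan_def)
    also have "\<dots> = (\<Sum>k\<in>UNIV. rscale (g k) (c (g k)))"
      using sum.reindex_bij_betw[OF assms(3), of "\<lambda>v. rscale v (c v)"] by simp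
    also have "\<dots> = (\<chi> i k. g k $ i) *v (\<chi> k. c (g k))"
      by (simp add: vec_eq_iff matrix_vector_mult_def)
    finally show ?thesis
      by blast
  qed
  then show ?thesis
    by auto
qed

definition zero_columns_basis :: "'n set \<Rightarrow> ('a^'n^'m) set" where
  "zero_columns_basis K = (\<lambda>(i, k, b). axis i (axis k b)) ` (UNIV \<times> K \<times> Bd)"

lemma axis_axis_mem_span:
  assumes "k \<in> K"
  shows "axis i (axis k x) \<in> QM.span (zero_columns_basis K)"
proof -
  have "x \<in> D.span Bd"
    by (simp add: D.span_Basis)
  then show ?thesis
  proof (rule D.span_induct)
    show "D.subspace {x. axis i (axis k x) \<in> QM.span (zero_columns_basis K)}"
      unfolding D.subspace_def
      by (auto simp: axis_axis_add axis_axis_0 QM.span_add QM.span_zero QM.span_scale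
          simp flip: qscale_axis_axis)
  next
    fix b
    assume "b \<in> Bd"
    then have "axis i (axis k b) \<in> zero_columns_basis K"
      using assms unfolding zero_columns_basis_def by (intro image_eqI[where x = "(i, k, b)"]) auto
    then show "axis i (axis k b) \<in> QM.span (zero_columns_basis K)"
      by (rule QM.span_base)
  qed
qed

lemma finite_zero_columns_basis: "finite (zero_columns_basis K)"
  using D.finite_Basis by (simp add: zero_columns_basis_def)

lemma card_zero_columns_basis:
  "card (zero_columns_basis K :: ('a^'n^'m) set) \<le> CARD('m) * card K * card Bd"
  unfolding zero_columns_basis_def
  by (rule order.trans[OF card_image_le]) (simp_all add: D.finite_Basis card_cartesian_product)

lemma zero_columns_subset_span:
  "{Y :: 'a^'n^'m. \<forall>i k. k \<notin> K \<longrightarrow> Y $ i $ k = 0} \<subseteq> QM.span (zero_columns_basis K)"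
proof
  fix Y :: "'a^'n^'m"
  assume "Y \<in> {Y. \<forall>i k. k \<notin> K \<longrightarrow> Y $ i $ k = 0}"
  then have "Y = (\<Sum>(r, k)\<in>UNIV \<times> K. axis r (axis k (Y $ r $ k)))"
    by (intro matrix_eq_sum_axis_axis) simp
  also have "\<dots> \<in> QM.span (zero_columns_basis K)"
    by (auto intro!: QM.span_sum axis_axis_mem_span)
  finally show "Y \<in> QM.span (zero_columns_basis K)" .
qed

lemma card_independent_nilpotent_less:
  fixes A :: "('a^'n^'n) set" and S0 :: "('a^'n) set"
  assumes S0: "right_indep S0" "card S0 < CARD('n)"
    and A: "QM.independent A"
    and kills: "\<And>X v. X \<in> A \<Longrightarrow> v \<in> S0 \<Longrightarrow> X *v v = 0"
    and nil: "\<And>Z. Z \<in> QM.span A \<Longrightarrow> \<exists>M. mat_pow Z M = 0"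
  shows "card A < CARD('n) * (CARD('n) - card S0) * card Bd"
proof -
  obtain B where B: "S0 \<subseteq> B" "right_indep B" "card B = CARD('n)"
    using right_indep_extend[OF S0(1)] .
  obtain g :: "'n \<Rightarrow> 'a^'n" where g: "bij_betw g UNIV B"
    using finite_same_card_bij[of "UNIV :: 'n set" B] B(3) right_indep_finite[OF B(2)] by auto
  define P :: "'a^'n^'n" where "P = (\<chi> i k. g k $ i)"
  define K where "K = {k. g k \<notin> S0}"
  let ?\<psi> = "\<lambda>X. X ** P"
  have col: "(X ** P) $ i $ k = (X *v g k) $ i" for X i k
    by (simp add: P_def matrix_matrix_mult_def matrix_vector_mult_def)
  have "S0 \<noteq> B"
    using S0(2) B(3) by auto
  then obtain k0 where k0: "g k0 \<notin> S0"
    using B(1) g by (metis bij_betw_imp_surj_on imageE subsetI subset_antisym)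
  define Y0 where "Y0 = (\<chi> i k. if k = k0 then g k0 $ i else 0)"
  have "Y0 \<notin> QM.span (?\<psi> ` A)"
    unfolding Y0_def
  proof (rule single_column_notin_span_mult_nilpotent[OF nil])
    show "P *v axis k0 1 = g k0"
      by (simp add: vec_eq_iff matrix_vector_mult_axis P_def)
    show "g k0 \<noteq> 0"
      using right_indep_nonzero[OF B(2)] g by (metis bij_betwE UNIV_I)
  qed
  have "inj ?\<psi>"
    unfolding P_def by (intro inj_matrix_mult_right_if_surj surj_matrix_of_columns[OF B(2,3) g])
  with \<open>Y0 \<notin> QM.span (?\<psi> ` A)\<close> have ind: "QM.independent (insert Y0 (?\<psi> ` A))"
    by (intro QM.independent_insertI module_hom.independent_inj_image[OF module_hom_matrix_mult_right A])
  have "insert Y0 (?\<psi> ` A) \<subseteq> QM.span (zero_columns_basis K)"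
    using kills k0 zero_columns_subset_span[of K] by (auto simp: col K_def Y0_def)
  then have "finite (insert Y0 (?\<psi> ` A))"
    and "card (insert Y0 (?\<psi> ` A)) \<le> card (zero_columns_basis K :: ('a^'n^'n) set)"
    using QM.independent_span_bound[OF finite_zero_columns_basis ind] by simp_all
  moreover have "Y0 \<notin> ?\<psi> ` A"
    using \<open>Y0 \<notin> QM.span (?\<psi> ` A)\<close> QM.span_base[of Y0 "?\<psi> ` A"] by blast
  moreover have "card (?\<psi> ` A) = card A"
    by (rule card_image[OF inj_on_subset[OF \<open>inj ?\<psi>\<close> subset_UNIV]])
  ultimately show ?thesis
    using card_zero_columns_basis[of K, where 'm = 'n] card_preimage_compl[OF g B(1)]
    by (simp add: K_def)
qed

end

lemma Z_indep_empty: "Z_indep G {}"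
  by (simp add: Z_indep_def)

lemma rank_Z_less:
  assumes "\<And>T. Z_indep G T \<Longrightarrow> card T < N"
  shows "rank_Z G < N"
proof -
  have "N > 0"
    using assms[OF Z_indep_empty] by simp
  moreover have "rank_Z G \<le> N - 1"
    unfolding rank_Z_def
  proof (rule cSup_least)
    show "{card T |T. Z_indep G T} \<noteq> {}"
      using Z_indep_empty by blast
    fix x
    assume "x \<in> {card T |T. Z_indep G T}"
    then show "x \<le> N - 1"
      using assms by fastforce
  qed
  ultimately show ?thesis
    by simp
qed

lemma rat_basis_exists:
  assumes "fin_dim_over_Q TYPE('a)"
  obtains Bd :: "'a::{division_ring,ring_char_0} set" where "rat_basis Bd"
proof -
  obtain Bf :: "'a set" where "finite Bf" "QD.span Bf = UNIV"
    using assms by (auto simp: fin_dim_over_Q_def)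
  obtain Bd :: "'a set" where "QD.independent Bd" "UNIV \<subseteq> QD.span Bd"
    by (rule QD.basis_exists[of UNIV])
  have "finite Bd"
    using QD.independent_span_bound[OF \<open>finite Bf\<close> \<open>QD.independent Bd\<close>] \<open>QD.span Bf = UNIV\<close>
    by simp
  then show ?thesis
    using \<open>QD.independent Bd\<close> \<open>UNIV \<subseteq> QD.span Bd\<close>
    by (intro that[of Bd]) (simp add: rat_basis_def finite_dimensional_vector_space_def
        finite_dimensional_vector_space_axioms_def QD.vector_space_axioms top.extremum_unique)
qed

locale unipotent_rat_basis = unipotent_abelian_subgroup S + rat_basis Bd
  for S :: "('a::{division_ring,ring_char_0}^'n^'n) set" and Bd :: "'a set"
begin

abbreviation common_kernel :: "('a^'n) set" where
  "common_kernel \<equiv> {v. \<forall>A\<in>S. (A - mat 1) *v v = 0}"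

lemma card_common_kernel_indep_less:
  assumes "S \<noteq> {mat 1}" and "S0 \<subseteq> common_kernel" and "right_indep S0"
  shows "card S0 < CARD('n)"
proof (rule ccontr)
  assume "\<not> card S0 < CARD('n)"
  then have "rspan S0 = UNIV"
    using right_indep_card_le[OF assms(3)] rspan_eq_UNIV[OF assms(3)] by simp
  then have "(A - mat 1) *v x = 0" if "A \<in> S" for A x
    using matrix_vector_mult_rspan_eq_0[of S0 "A - mat 1" x] assms(2) that by auto
  then have "A = mat 1" if "A \<in> S" for A
    using that by (intro matrix_eq_if_vector_mult_eq) (simp add: matrix_vector_mult_diff_rdistrib)
  moreover have "mat 1 \<in> S"
    using one_closed by simp
  ultimately have "S = {mat 1}"
    by blast
  then show False
    using assms(1) by contradiction
qed

lemma card_Z_indep_less: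
  assumes "S0 \<subseteq> common_kernel" "right_indep S0" "card S0 < CARD('n)" and T: "Z_indep G T"
  shows "card T < CARD('n) * (CARD('n) - card S0) * card Bd"
proof -
  have "T \<subseteq> S"
    using T by (simp add: Z_indep_def)
  have "card (mat_log ` T) < CARD('n) * (CARD('n) - card S0) * card Bd"
  proof (rule card_independent_nilpotent_less[OF assms(2,3) Z_indep_independent_log[OF T]])
    fix X v
    assume "X \<in> mat_log ` T" "v \<in> S0"
    then obtain a where a: "a \<in> S" "X = mat_log a" "(a - mat 1) *v v = 0"
      using \<open>T \<subseteq> S\<close> assms(1) by auto
    then obtain K where "mat_pow (a - mat 1) K = 0"
      using nilpotent_minus_mat_1 by blast
    then show "X *v v = 0"
      using mat_log_mult_vec_eq_0 a(2,3) by simp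
  next
    fix Z
    assume "Z \<in> QM.span (mat_log ` T)"
    then show "\<exists>M. mat_pow Z M = 0"
      by (rule Z_indep_span_log_nilpotent[OF T])
  qed
  then show ?thesis
    by (simp add: card_image Z_indep_inj_on_log[OF T])
qed

end

theorem lemma5p26:
  fixes \<Sigma> :: "('a::{division_ring,ring_char_0}^'n^'n) set"
  assumes fd: "fin_dim_over_Q TYPE('a)"
    and sub: "subgroup \<Sigma> GL"
    and ab: "\<forall>A\<in>\<Sigma>. \<forall>B\<in>\<Sigma>. A ** B = B ** A"
    and fg: "\<exists>X. finite X \<and> X \<subseteq> \<Sigma> \<and> generate GL X = \<Sigma>"
    and nontriv: "\<Sigma> \<noteq> {mat 1}"
    and unip: "\<forall>A\<in>\<Sigma>. unipotent_mat A"
  shows "rank_Z (GL\<lparr>carrier := \<Sigma>\<rparr>)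
     < CARD('n) * (CARD('n) - right_dim {v. \<forall>A\<in>\<Sigma>. (A - mat 1) *v v = 0})
         * degree_over_Q TYPE('a)"
proof -
  obtain Bd :: "'a set" where "rat_basis Bd"
    using rat_basis_exists[OF fd] .
  then interpret unipotent_rat_basis \<Sigma> Bd
    using sub ab unip by (simp add: unipotent_rat_basis_def unipotent_abelian_subgroup_def)
  obtain S0 where S0: "S0 \<subseteq> common_kernel" "right_indep S0" "card S0 = right_dim common_kernel"
    by (rule right_dim_attained)
  have "card S0 < CARD('n)"
    using card_common_kernel_indep_less[OF nontriv S0(1,2)] .
  then have "rank_Z G < CARD('n) * (CARD('n) - card S0) * card Bd"
    using card_Z_indep_less[OF S0(1,2)] by (intro rank_Z_less)
  then show ?thesis
    using S0(3) by (simp add: degree_over_Q_def)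
qed

end
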